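(* Let $G=(V,E,p,(V_{E},V_{O}))$ be a parity game, let $D\subseteq V$ be an Odd-dominion of $G$, and let $k$ be an odd number such that $p(w)\ge k$ for all $w\in D$. Let $v\in D$ with $p(v)=k$, and let $\sigma_D$ be a strategy of Odd that is winning for Odd on $D$ and closed on $D$. Let $A=\mathrm{Attr}^{\ge k}_{O}(\{v\})$ and let $\sigma_{Attr}$ be the strategy of Odd defined on $(A\setminus\{v\})\cap V_{O}$ attracting towards $v$. Let $\sigma$ be the strategy defined on $\mathrm{dom}(\sigma_{Attr})\cup\mathrm{dom}(\sigma_D)$ as $\sigma_{Attr}(w)$ for $w\in\mathrm{dom}(\sigma_{Attr})$ and as $\sigma_D(w)$ for $w\in\mathrm{dom}(\sigma_D)\setminus\mathrm{dom}(\sigma_{Attr})$. Then $\sigma$, on $D\cup A$, is winning for Odd, and plays consistent with it starting in $D\cup A$ only visit priorities greater than or equal to $k$.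
   Context: A parity game $G=(V,E,p,(V_{E},V_{O}))$: finite $V$ partitioned into $V_{E}$ (Even) and $V_{O}$ (Odd), total edge relation $E$, priorities $p:V\to\mathbb{N}$; $\mathrm{post}(v)=\{w:(v,w)\in E\}$, $V_{\ge k}=\{v:p(v)\ge k\}$. Plays are infinite paths; Even wins iff the least priority occurring infinitely often is even. A set $D$ is an Odd-dominion if Odd has a strategy such that every play starting in $D$ consistent with it is won by Odd and stays in $D$; a strategy is closed on $D$ if all consistent plays from $D$ stay in $D$. Guarded attractor: for a priority $k$ and $U\subseteq V_{\ge k}$, $\mathrm{Attr}^{\ge k}_{O}(U)$ is the least set $A$ with $U\subseteq A\subseteq V_{\ge k}$ such that every $u\in V_{O}\cap V_{\ge k}$ with $\mathrm{post}(u)\cap A\ne\emptyset$ is in $A$, and every $u\in V_{E}\cap V_{\ge k}$ with $\mathrm{post}(u)\subseteq A$ is in $A$. Computing $A$ as the limit of the increasing chain $A_0=U$, $A_{j+1}=A_j\cup\{$vertices added by the rules from $A_j\}$, the strategy attracting towards $U$ maps each $u\in (A\setminus U)\cap V_{O}$ first added in $A_{j+1}$ to a successor in $A_j$. *)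

theory Defs
  imports Main
begin

definition parity_game :: "'v set \<Rightarrow> ('v \<times> 'v) set \<Rightarrow> ('v \<Rightarrow> nat) \<Rightarrow> 'v set \<Rightarrow> 'v set \<Rightarrow> bool" where
  "parity_game V E p VE VO \<longleftrightarrow>
     finite V \<and> E \<subseteq> V \<times> V \<and> (\<forall>v\<in>V. \<exists>w. (v, w) \<in> E)
     \<and> VE \<union> VO = V \<and> VE \<inter> VO = {}"

definition post :: "('v \<times> 'v) set \<Rightarrow> 'v \<Rightarrow> 'v set" where
  "post E v = {w. (v, w) \<in> E}"

definition V_ge :: "'v set \<Rightarrow> ('v \<Rightarrow> nat) \<Rightarrow> nat \<Rightarrow> 'v set" where
  "V_ge V p k = {v \<in> V. p v \<ge> k}"

definition is_play :: "('v \<times> 'v) set \<Rightarrow> (nat \<Rightarrow> 'v) \<Rightarrow> bool" where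
  "is_play E P \<longleftrightarrow> (\<forall>i. (P i, P (Suc i)) \<in> E)"

definition odd_wins_play :: "('v \<Rightarrow> nat) \<Rightarrow> (nat \<Rightarrow> 'v) \<Rightarrow> bool" where
  "odd_wins_play p P \<longleftrightarrow> odd (LEAST q. \<exists>\<^sub>\<infinity> i. p (P i) = q)"

definition odd_strategy :: "('v \<times> 'v) set \<Rightarrow> 'v set \<Rightarrow> ('v \<Rightarrow> 'v option) \<Rightarrow> bool" where
  "odd_strategy E VO \<sigma> \<longleftrightarrow> dom \<sigma> \<subseteq> VO \<and> (\<forall>u\<in>dom \<sigma>. (u, the (\<sigma> u)) \<in> E)"

definition consistent :: "('v \<times> 'v) set \<Rightarrow> ('v \<Rightarrow> 'v option) \<Rightarrow> (nat \<Rightarrow> 'v) \<Rightarrow> bool" where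
  "consistent E \<sigma> P \<longleftrightarrow> is_play E P \<and> (\<forall>i. P i \<in> dom \<sigma> \<longrightarrow> \<sigma> (P i) = Some (P (Suc i)))"

definition odd_winning_on :: "('v \<times> 'v) set \<Rightarrow> ('v \<Rightarrow> nat) \<Rightarrow> ('v \<Rightarrow> 'v option) \<Rightarrow> 'v set \<Rightarrow> bool" where
  "odd_winning_on E p \<sigma> D \<longleftrightarrow> (\<forall>P. consistent E \<sigma> P \<and> P 0 \<in> D \<longrightarrow> odd_wins_play p P)"

definition closed_on :: "('v \<times> 'v) set \<Rightarrow> ('v \<Rightarrow> 'v option) \<Rightarrow> 'v set \<Rightarrow> bool" where
  "closed_on E \<sigma> D \<longleftrightarrow> (\<forall>P. consistent E \<sigma> P \<and> P 0 \<in> D \<longrightarrow> (\<forall>i. P i \<in> D))"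

definition odd_dominion :: "'v set \<Rightarrow> ('v \<times> 'v) set \<Rightarrow> ('v \<Rightarrow> nat) \<Rightarrow> 'v set \<Rightarrow> 'v set \<Rightarrow> bool" where
  "odd_dominion V E p VO D \<longleftrightarrow> D \<subseteq> V \<and>
     (\<exists>\<sigma>. odd_strategy E VO \<sigma> \<and> odd_winning_on E p \<sigma> D \<and> closed_on E \<sigma> D)"

definition attr_closed :: "'v set \<Rightarrow> ('v \<times> 'v) set \<Rightarrow> ('v \<Rightarrow> nat) \<Rightarrow> 'v set \<Rightarrow> 'v set \<Rightarrow> nat \<Rightarrow> 'v set \<Rightarrow> bool" where
  "attr_closed V E p VE VO k A \<longleftrightarrow>
     (\<forall>u \<in> VO \<inter> V_ge V p k. post E u \<inter> A \<noteq> {} \<longrightarrow> u \<in> A) \<and>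
     (\<forall>u \<in> VE \<inter> V_ge V p k. post E u \<subseteq> A \<longrightarrow> u \<in> A)"

definition attr :: "'v set \<Rightarrow> ('v \<times> 'v) set \<Rightarrow> ('v \<Rightarrow> nat) \<Rightarrow> 'v set \<Rightarrow> 'v set \<Rightarrow> nat \<Rightarrow> 'v set \<Rightarrow> 'v set" where
  "attr V E p VE VO k U =
     \<Inter> {A. U \<subseteq> A \<and> A \<subseteq> V_ge V p k \<and> attr_closed V E p VE VO k A}"

definition attr_step :: "'v set \<Rightarrow> ('v \<times> 'v) set \<Rightarrow> ('v \<Rightarrow> nat) \<Rightarrow> 'v set \<Rightarrow> 'v set \<Rightarrow> nat \<Rightarrow> 'v set \<Rightarrow> 'v set" where
  "attr_step V E p VE VO k A =
     A \<union> {u \<in> VO \<inter> V_ge V p k. post E u \<inter> A \<noteq> {}}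
       \<union> {u \<in> VE \<inter> V_ge V p k. post E u \<subseteq> A}"

definition attr_chain :: "'v set \<Rightarrow> ('v \<times> 'v) set \<Rightarrow> ('v \<Rightarrow> nat) \<Rightarrow> 'v set \<Rightarrow> 'v set \<Rightarrow> nat \<Rightarrow> 'v set \<Rightarrow> nat \<Rightarrow> 'v set" where
  "attr_chain V E p VE VO k U j = (attr_step V E p VE VO k ^^ j) U"

definition attracting_strategy :: "'v set \<Rightarrow> ('v \<times> 'v) set \<Rightarrow> ('v \<Rightarrow> nat) \<Rightarrow> 'v set \<Rightarrow> 'v set \<Rightarrow> nat \<Rightarrow> 'v set \<Rightarrow> ('v \<Rightarrow> 'v option) \<Rightarrow> bool" where
  "attracting_strategy V E p VE VO k U \<sigma> \<longleftrightarrow>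
     dom \<sigma> = (attr V E p VE VO k U - U) \<inter> VO \<and>
     (\<forall>u \<in> dom \<sigma>. \<forall>j. u \<in> attr_chain V E p VE VO k U (Suc j)
                         \<and> u \<notin> attr_chain V E p VE VO k U j
          \<longrightarrow> the (\<sigma> u) \<in> post E u \<and> the (\<sigma> u) \<in> attr_chain V E p VE VO k U j)"

end

theory Submission
  imports Defs "HOL-Library.Infinite_Set"
begin

text \<open>Odd plays the attractor strategy inside \<open>Attr\<close> and the dominion strategy elsewhere.
  Every move consistent with this combination decreases the attractor rank of a vertex
  of \<open>Attr - {v}\<close> or stays inside the dominion, so plays remain in \<open>D \<union> Attr\<close>, where all
  priorities are at least \<open>k\<close>. From any vertex of \<open>Attr\<close> the play reaches \<open>v\<close>. Hence either
  it visits \<open>v\<close> infinitely often, and the least priority seen infinitely often is the odd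
  \<open>k\<close>, or from some point on it never enters \<open>Attr\<close> again; that suffix is a play in \<open>D\<close>
  consistent with the winning strategy on \<open>D\<close>, and the winner does not depend on a finite prefix.\<close>

lemma consistent_edge: "consistent E \<sigma> P \<Longrightarrow> (P i, P (Suc i)) \<in> E"
  by (simp add: consistent_def is_play_def)

lemma consistent_follows: "consistent E \<sigma> P \<Longrightarrow> P i \<in> dom \<sigma> \<Longrightarrow> \<sigma> (P i) = Some (P (Suc i))"
  by (simp add: consistent_def)

lemma consistent_agree:
  assumes "consistent E \<sigma> P" and "\<And>i. P i \<in> dom \<sigma>' \<Longrightarrow> \<sigma>' (P i) = \<sigma> (P i)"
  shows "consistent E \<sigma>' P"
  using assms unfolding consistent_def by (metis domI domIff)

lemma consistent_map_add_right: "consistent E (\<sigma>1 ++ \<sigma>2) P \<Longrightarrow> consistent E \<sigma>2 P"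
  by (erule consistent_agree) (simp add: map_add_dom_app_simps)

lemma consistent_map_add_left:
  "consistent E (\<sigma>1 ++ \<sigma>2) P \<Longrightarrow> (\<And>i. P i \<notin> dom \<sigma>2) \<Longrightarrow> consistent E \<sigma>1 P"
  by (erule consistent_agree) (simp add: map_add_dom_app_simps)

lemma consistent_suffix: "consistent E \<sigma> P \<Longrightarrow> consistent E \<sigma> (\<lambda>i. P (i + N))"
  by (simp add: consistent_def is_play_def)

lemma consistent_prepend:
  assumes "consistent E \<sigma> P" "(u, P 0) \<in> E" "u \<in> dom \<sigma> \<Longrightarrow> \<sigma> u = Some (P 0)"
  shows "consistent E \<sigma> (\<lambda>i. case i of 0 \<Rightarrow> u | Suc j \<Rightarrow> P j)"
  using assms unfolding consistent_def is_play_def by (auto split: nat.split)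

lemma odd_wins_play_suffix: "odd_wins_play p (\<lambda>i. P (i + N)) \<longleftrightarrow> odd_wins_play p P"
proof -
  have "(\<exists>\<^sub>\<infinity> i. p (P (i + N)) = q) \<longleftrightarrow> (\<exists>\<^sub>\<infinity> i. p (P i) = q)" for q
    using eventually_sequentially_seg[of "\<lambda>i. p (P i) \<noteq> q" N]
    by (simp add: frequently_def cofinite_eq_sequentially)
  then show ?thesis
    by (simp add: odd_wins_play_def)
qed

lemma odd_wins_play_if_min_priority_frequent:
  assumes "odd k" "\<And>i. k \<le> p (P i)" "\<exists>\<^sub>\<infinity> i. p (P i) = k"
  shows "odd_wins_play p P"
proof -
  have "(LEAST q. \<exists>\<^sub>\<infinity> i. p (P i) = q) = k"
  proof (rule Least_equality)
    fix q assume "\<exists>\<^sub>\<infinity> i. p (P i) = q"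
    then obtain i where "p (P i) = q" by (rule INFM_E)
    with assms(2) show "k \<le> q" by blast
  qed (fact assms(3))
  with assms(1) show ?thesis by (simp add: odd_wins_play_def)
qed


lemma attr_chain_0 [simp]: "attr_chain V E p VE VO k U 0 = U"
  by (simp add: attr_chain_def)

lemma attr_chain_Suc [simp]:
  "attr_chain V E p VE VO k U (Suc j) = attr_step V E p VE VO k (attr_chain V E p VE VO k U j)"
  by (simp add: attr_chain_def)

lemma attr_chain_mono:
  "i \<le> j \<Longrightarrow> attr_chain V E p VE VO k U i \<subseteq> attr_chain V E p VE VO k U j"
  by (rule lift_Suc_mono_le[where f = "attr_chain V E p VE VO k U"]) (auto simp: attr_step_def)

lemma attr_chain_subset_attr: "attr_chain V E p VE VO k U j \<subseteq> attr V E p VE VO k U"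
proof -
  have "attr_chain V E p VE VO k U j \<subseteq> A"
    if "U \<subseteq> A" "attr_closed V E p VE VO k A" for A
    using that
  proof (induction j)
    case (Suc j)
    then show ?case
      unfolding attr_chain_Suc attr_step_def attr_closed_def by blast
  qed simp
  then show ?thesis
    unfolding attr_def by blast
qed

lemma attr_chain_subset_V_ge:
  "U \<subseteq> V_ge V p k \<Longrightarrow> attr_chain V E p VE VO k U j \<subseteq> V_ge V p k"
  by (induction j) (auto simp: attr_step_def)

lemma attr_eq_Union_attr_chain:
  assumes fin: "finite V" and EV: "E \<subseteq> V \<times> V" and U: "U \<subseteq> V_ge V p k"
  shows "attr V E p VE VO k U = (\<Union>j. attr_chain V E p VE VO k U j)"
proof
  let ?C = "attr_chain V E p VE VO k U"
  have "attr_closed V E p VE VO k (\<Union>j. ?C j)"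
    unfolding attr_closed_def
  proof (intro conjI ballI impI)
    fix u assume u: "u \<in> VO \<inter> V_ge V p k" "post E u \<inter> (\<Union>j. ?C j) \<noteq> {}"
    then obtain j where "post E u \<inter> ?C j \<noteq> {}" by blast
    with u(1) have "u \<in> ?C (Suc j)" by (auto simp: attr_step_def)
    then show "u \<in> (\<Union>j. ?C j)" by blast
  next
    fix u assume u: "u \<in> VE \<inter> V_ge V p k" "post E u \<subseteq> (\<Union>j. ?C j)"
    have "post E u \<subseteq> V"
      using EV by (auto simp: post_def)
    then have "finite (post E u)"
      using fin by (rule finite_subset)
    moreover have "subset.chain UNIV (range ?C)"
      unfolding subset.chain_def
      using nat_le_linear by (auto dest!: attr_chain_mono[of _ _ V E p VE VO k U])
    ultimately obtain B where "B \<in> range ?C" "post E u \<subseteq> B"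
      using u(2) finite_subset_Union_chain[of "post E u" "range ?C"] by auto
    then obtain j where "post E u \<subseteq> ?C j" by blast
    with u(1) have "u \<in> ?C (Suc j)" by (auto simp: attr_step_def)
    then show "u \<in> (\<Union>j. ?C j)" by blast
  qed
  moreover have "U \<subseteq> (\<Union>j. ?C j)"
    using attr_chain_0[of V E p VE VO k U] by blast
  moreover have "(\<Union>j. ?C j) \<subseteq> V_ge V p k"
    using attr_chain_subset_V_ge[OF U] by blast
  ultimately show "attr V E p VE VO k U \<subseteq> (\<Union>j. ?C j)"
    unfolding attr_def by blast
qed (intro UN_least attr_chain_subset_attr)

lemma attr_subset_V_ge: "U \<subseteq> V_ge V p k \<Longrightarrow> attr V E p VE VO k U \<subseteq> V_ge V p k"
  unfolding attr_def attr_closed_def by blast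

lemma attr_chain_first_entry:
  assumes "u \<in> attr_chain V E p VE VO k U n" "u \<notin> U"
  shows "\<exists>j<n. u \<in> attr_chain V E p VE VO k U (Suc j) \<and> u \<notin> attr_chain V E p VE VO k U j"
  using assms(1)
proof (induction n)
  case (Suc n)
  then show ?case
    by (cases "u \<in> attr_chain V E p VE VO k U n") (auto intro: less_SucI)
qed (use assms(2) in simp)

lemma attracting_move_descends:
  assumes \<sigma>A: "attracting_strategy V E p VE VO k U \<sigma>A"
    and u: "u \<in> attr_chain V E p VE VO k U n" "u \<notin> U"
    and move: "(u, w) \<in> E" "u \<in> dom \<sigma>A \<Longrightarrow> \<sigma>A u = Some w"
  shows "\<exists>j<n. w \<in> attr_chain V E p VE VO k U j"
proof -
  let ?C = "attr_chain V E p VE VO k U"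
  obtain j where j: "j < n" "u \<in> ?C (Suc j)" "u \<notin> ?C j"
    using attr_chain_first_entry[OF u] by blast
  have "w \<in> ?C j"
  proof (cases "u \<in> VO")
    case True
    have "u \<in> attr V E p VE VO k U"
      by (rule subsetD[OF attr_chain_subset_attr j(2)])
    with True u(2) \<sigma>A have u_dom: "u \<in> dom \<sigma>A"
      by (simp add: attracting_strategy_def)
    with \<sigma>A j(2,3) have "the (\<sigma>A u) \<in> ?C j"
      by (simp add: attracting_strategy_def)
    with move(2)[OF u_dom] show ?thesis by simp
  next
    case False
    with j(2,3) move(1) show ?thesis by (auto simp: attr_step_def post_def)
  qed
  with j(1) show ?thesis by blast
qed

lemma attracting_play_reaches_target:
  assumes \<sigma>A: "attracting_strategy V E p VE VO k U \<sigma>A"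
    and P: "consistent E \<sigma>A P" "P i \<in> attr_chain V E p VE VO k U n"
  shows "\<exists>m\<ge>i. P m \<in> U"
  using P(2)
proof (induction n arbitrary: i rule: less_induct)
  case (less n)
  show ?case
  proof (cases "P i \<in> U")
    case False
    obtain j where "j < n" "P (Suc i) \<in> attr_chain V E p VE VO k U j"
      using attracting_move_descends[OF \<sigma>A less.prems False]
        consistent_edge[OF P(1)] consistent_follows[OF P(1)] by blast
    with less.IH obtain m where "Suc i \<le> m" "P m \<in> U" by blast
    then show ?thesis by (auto intro: exI[of _ m])
  qed auto
qed

lemma exists_consistent_play:
  assumes game: "parity_game V E p VE VO" and \<sigma>: "odd_strategy E VO \<sigma>" and w: "w \<in> V"
  shows "\<exists>P. consistent E \<sigma> P \<and> P 0 = w"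
proof -
  define nxt where "nxt x = (case \<sigma> x of Some y \<Rightarrow> y | None \<Rightarrow> SOME y. (x, y) \<in> E)" for x
  have EV: "E \<subseteq> V \<times> V" and total: "\<forall>x\<in>V. \<exists>y. (x, y) \<in> E"
    using game by (auto simp: parity_game_def)
  have nxt_edge: "(x, nxt x) \<in> E" if "x \<in> V" for x
  proof (cases "\<sigma> x")
    case None
    with total that show ?thesis by (auto simp: nxt_def intro: someI_ex)
  next
    case (Some y)
    with \<sigma> show ?thesis by (force simp: nxt_def odd_strategy_def)
  qed
  have iter_V: "(nxt ^^ i) w \<in> V" for i
    using w EV nxt_edge by (induction i) auto
  have "consistent E \<sigma> (\<lambda>i. (nxt ^^ i) w)"
    unfolding consistent_def is_play_def
    using iter_V nxt_edge by (auto simp: nxt_def)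
  then show ?thesis by (intro exI[of _ "\<lambda>i. (nxt ^^ i) w"]) simp
qed

lemma closed_on_move:
  assumes game: "parity_game V E p VE VO" and \<sigma>: "odd_strategy E VO \<sigma>"
    and closed: "closed_on E \<sigma> D" and u: "u \<in> D"
    and move: "(u, w) \<in> E" "u \<in> dom \<sigma> \<Longrightarrow> \<sigma> u = Some w"
  shows "w \<in> D"
proof -
  \<comment> \<open>closedness speaks only about whole plays, so extend the move to a consistent play\<close>
  have "w \<in> V"
    using game move(1) by (auto simp: parity_game_def)
  then obtain P where P: "consistent E \<sigma> P" "P 0 = w"
    using exists_consistent_play[OF game \<sigma>] by blast
  let ?Q = "\<lambda>i. case i of 0 \<Rightarrow> u | Suc j \<Rightarrow> P j"
  have "consistent E \<sigma> ?Q"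
    using consistent_prepend[OF P(1)] P(2) move by simp
  moreover have "?Q 0 \<in> D"
    using u by simp
  ultimately have "\<forall>i. ?Q i \<in> D"
    using closed unfolding closed_on_def by blast
  then have "?Q (Suc 0) \<in> D" ..
  with P(2) show ?thesis by simp
qed

lemma dominion_attr_priority_ge:
  assumes "\<forall>w\<in>D. k \<le> p w" "U \<subseteq> V_ge V p k" "w \<in> D \<union> attr V E p VE VO k U"
  shows "k \<le> p w"
  using assms subsetD[OF attr_subset_V_ge[OF assms(2)]] by (auto simp: V_ge_def)

lemma dominion_attr_play_stays:
  assumes game: "parity_game V E p VE VO" and U: "U \<subseteq> D" "U \<subseteq> V_ge V p k"
    and \<sigma>D: "odd_strategy E VO \<sigma>D" "closed_on E \<sigma>D D"
    and \<sigma>A: "attracting_strategy V E p VE VO k U \<sigma>A"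
    and P: "consistent E (\<sigma>D ++ \<sigma>A) P" "P 0 \<in> D \<union> attr V E p VE VO k U"
  shows "P i \<in> D \<union> attr V E p VE VO k U"
proof (induction i)
  case (Suc i)
  let ?A = "attr V E p VE VO k U"
  show ?case
  proof (cases "P i \<in> ?A - U")
    case True
    have "finite V" "E \<subseteq> V \<times> V"
      using game by (simp_all add: parity_game_def)
    with True U(2) obtain n where "P i \<in> attr_chain V E p VE VO k U n"
      using attr_eq_Union_attr_chain by blast
    moreover note \<sigma>A_play = consistent_map_add_right[OF P(1)]
    ultimately obtain j where "P (Suc i) \<in> attr_chain V E p VE VO k U j"
      using attracting_move_descends[OF \<sigma>A] True
        consistent_edge[OF \<sigma>A_play] consistent_follows[OF \<sigma>A_play] by blast
    then have "P (Suc i) \<in> ?A"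
      by (rule subsetD[OF attr_chain_subset_attr])
    then show ?thesis ..
  next
    case False
    with Suc.IH U(1) have "P i \<in> D" by blast
    from False \<sigma>A have "P i \<notin> dom \<sigma>A"
      by (simp add: attracting_strategy_def)
    then have "P i \<in> dom \<sigma>D \<Longrightarrow> \<sigma>D (P i) = Some (P (Suc i))"
      using consistent_follows[OF P(1), of i] by (simp add: map_add_dom_app_simps)
    then show ?thesis
      using closed_on_move[OF game \<sigma>D \<open>P i \<in> D\<close> consistent_edge[OF P(1)]] by blast
  qed
qed (fact P(2))

lemma dominion_attr_play_won:
  assumes game: "parity_game V E p VE VO" and D: "D \<subseteq> V" "\<forall>w\<in>D. k \<le> p w"
    and U: "U \<subseteq> D" "\<forall>u\<in>U. p u = k" and k: "odd k"
    and \<sigma>D: "odd_strategy E VO \<sigma>D" "odd_winning_on E p \<sigma>D D" "closed_on E \<sigma>D D"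
    and \<sigma>A: "attracting_strategy V E p VE VO k U \<sigma>A"
    and P: "consistent E (\<sigma>D ++ \<sigma>A) P" "P 0 \<in> D \<union> attr V E p VE VO k U"
  shows "odd_wins_play p P"
proof -
  let ?A = "attr V E p VE VO k U"
  have U_ge: "U \<subseteq> V_ge V p k"
    using D U(1) by (auto simp: V_ge_def)
  note stays = dominion_attr_play_stays[OF game U(1) U_ge \<sigma>D(1,3) \<sigma>A P]
  have prio: "k \<le> p (P i)" for i
    using dominion_attr_priority_ge[OF D(2) U_ge stays] .
  show ?thesis
  proof (cases "\<exists>\<^sub>\<infinity> i. P i \<in> U")
    case True
    then have "\<exists>\<^sub>\<infinity> i. p (P i) = k"
      by (rule INFM_mono) (use U(2) in blast)
    with k prio show ?thesis
      by (rule odd_wins_play_if_min_priority_frequent)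
  next
    case False
    then obtain N where N: "\<forall>i\<ge>N. P i \<notin> U"
      by (auto simp: MOST_nat_le)
    have "finite V" "E \<subseteq> V \<times> V"
      using game by (simp_all add: parity_game_def)
    note A = attr_eq_Union_attr_chain[OF this U_ge]
    have late_outside_A: "P i \<notin> ?A" if "N \<le> i" for i
    proof
      assume "P i \<in> ?A"
      then obtain n where "P i \<in> attr_chain V E p VE VO k U n"
        using A by blast
      with attracting_play_reaches_target[OF \<sigma>A consistent_map_add_right[OF P(1)]]
      obtain m where "i \<le> m" "P m \<in> U" by blast
      with N that show False by auto
    qed
    have "P (i + N) \<notin> dom \<sigma>A" for i
      using late_outside_A[of "i + N"] \<sigma>A by (simp add: attracting_strategy_def)
    then have "consistent E \<sigma>D (\<lambda>i. P (i + N))"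
      using consistent_map_add_left[OF consistent_suffix[OF P(1)]] by blast
    moreover have "P (0 + N) \<in> D"
      using stays[of N] late_outside_A[of N] by simp
    ultimately have "odd_wins_play p (\<lambda>i. P (i + N))"
      using \<sigma>D(2) unfolding odd_winning_on_def by blast
    then show ?thesis
      by (simp add: odd_wins_play_suffix)
  qed
qed

theorem lemma4:
  fixes V :: "'v set" and E :: "('v \<times> 'v) set" and p :: "'v \<Rightarrow> nat"
    and VE VO D :: "'v set" and k :: nat and v :: 'v
    and \<sigma>D \<sigma>Attr :: "'v \<Rightarrow> 'v option"
  assumes game: "parity_game V E p VE VO"
    and dom: "odd_dominion V E p VO D"
    and k_odd: "odd k"
    and D_ge: "\<forall>w\<in>D. p w \<ge> k"
    and v_D: "v \<in> D" and pv: "p v = k"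
    and \<sigma>D_strat: "odd_strategy E VO \<sigma>D"
    and \<sigma>D_win: "odd_winning_on E p \<sigma>D D"
    and \<sigma>D_closed: "closed_on E \<sigma>D D"
    and \<sigma>Attr: "attracting_strategy V E p VE VO k {v} \<sigma>Attr"
  shows "odd_winning_on E p
           (\<lambda>w. if w \<in> dom \<sigma>Attr then \<sigma>Attr w else \<sigma>D w)
           (D \<union> attr V E p VE VO k {v})
       \<and> (\<forall>P. consistent E (\<lambda>w. if w \<in> dom \<sigma>Attr then \<sigma>Attr w else \<sigma>D w) P
              \<and> P 0 \<in> D \<union> attr V E p VE VO k {v} \<longrightarrow> (\<forall>i. p (P i) \<ge> k))"
proof -
  have \<sigma>: "(\<lambda>w. if w \<in> dom \<sigma>Attr then \<sigma>Attr w else \<sigma>D w) = \<sigma>D ++ \<sigma>Attr"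
    by (auto simp: map_add_def fun_eq_iff split: option.split)
  have D_V: "D \<subseteq> V"
    using dom by (simp add: odd_dominion_def)
  have v: "{v} \<subseteq> D" "\<forall>u\<in>{v}. p u = k" "{v} \<subseteq> V_ge V p k"
    using v_D pv D_V by (auto simp: V_ge_def)
  note won = dominion_attr_play_won[OF game D_V D_ge v(1,2) k_odd
      \<sigma>D_strat \<sigma>D_win \<sigma>D_closed \<sigma>Attr]
  note stays = dominion_attr_play_stays[OF game v(1,3) \<sigma>D_strat \<sigma>D_closed \<sigma>Attr]
  show ?thesis
    unfolding \<sigma> odd_winning_on_def
    using won dominion_attr_priority_ge[OF D_ge v(3) stays] by blast
qed

end
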